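(* Let $\mathbf A$ be a modular pseudo-Kleene lattice. For any $x,y\in A$, $x\,\mathrm C\,y$ holds if and only if the subalgebra $\mathbf{Sg}(x,y)$ of $\mathbf A$ generated by $x,y$ is a Kleene lattice (i.e. is distributive).
   Context: A pseudo-Kleene lattice is an algebra $(A,\land,\lor,{}',0,1)$ that is a bounded lattice with an antitone involution ${}'$ ($x\leq y\Rightarrow y'\leq x'$, $x''=x$) satisfying $x\land x'\leq y\lor y'$; it is modular if its lattice reduct is modular. For $a,b\in A$, $a\,\mathrm C\,b$ ($a$ commutes with $b$) means: (C1) $a\land(b\lor b')=(a\land b)\lor(a\land b')$; (C2) $b\land(a\lor a')=(b\land a)\lor(b\land a')$; (C3) $a\land a'=((a\land a')\land b)\lor((a\land a')\land b')$. $\mathbf{Sg}(x,y)$ is the smallest subset containing $x,y,0,1$ and closed under $\land,\lor,{}'$. *)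

theory Defs
  imports Main
begin

definition pseudo_kleene :: "('a::bounded_lattice \<Rightarrow> 'a) \<Rightarrow> bool" where
  "pseudo_kleene c \<longleftrightarrow>
     (\<forall>x y. x \<le> y \<longrightarrow> c y \<le> c x) \<and>
     (\<forall>x. c (c x) = x) \<and>
     (\<forall>x y. inf x (c x) \<le> sup y (c y))"

definition modular_lattice :: "'a::lattice itself \<Rightarrow> bool" where
  "modular_lattice _ \<longleftrightarrow>
     (\<forall>x y z::'a. x \<le> z \<longrightarrow> sup x (inf y z) = inf (sup x y) z)"

definition commutes :: "('a::bounded_lattice \<Rightarrow> 'a) \<Rightarrow> 'a \<Rightarrow> 'a \<Rightarrow> bool" where
  "commutes c a b \<longleftrightarrow>
     inf a (sup b (c b)) = sup (inf a b) (inf a (c b)) \<and>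
     inf b (sup a (c a)) = sup (inf b a) (inf b (c a)) \<and>
     inf a (c a) = sup (inf (inf a (c a)) b) (inf (inf a (c a)) (c b))"

inductive_set Sg :: "('a::bounded_lattice \<Rightarrow> 'a) \<Rightarrow> 'a \<Rightarrow> 'a \<Rightarrow> 'a set"
  for c :: "'a \<Rightarrow> 'a" and x y :: 'a where
  gen_x: "x \<in> Sg c x y"
| gen_y: "y \<in> Sg c x y"
| bot: "bot \<in> Sg c x y"
| top: "top \<in> Sg c x y"
| meet: "a \<in> Sg c x y \<Longrightarrow> b \<in> Sg c x y \<Longrightarrow> inf a b \<in> Sg c x y"
| join: "a \<in> Sg c x y \<Longrightarrow> b \<in> Sg c x y \<Longrightarrow> sup a b \<in> Sg c x y"
| compl: "a \<in> Sg c x y \<Longrightarrow> c a \<in> Sg c x y"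

text \<open>A subalgebra (closed subset) is a Kleene lattice iff its lattice reduct is distributive.\<close>
definition distributive_on :: "'a::lattice set \<Rightarrow> bool" where
  "distributive_on S \<longleftrightarrow>
     (\<forall>a\<in>S. \<forall>b\<in>S. \<forall>d\<in>S. inf a (sup b d) = sup (inf a b) (inf a d))"

end

theory Submission
  imports Defs
begin

(* (C1) says that x distributes over the pair y, y'. The sublattice
   {0, y \<and> y', y, y', y \<or> y', 1} is distributive and y, y' is its only incomparable
   pair, so x distributes over all of it. In a modular lattice, adjoining to a distributive
   sublattice D an element a that distributes over D gives the distributive sublattice of all
   d \<or> (a \<and> e) with d \<le> e in D. We adjoin x and then x'. In this normal form,
   x' distributing over the first extension reduces to distributive laws between x, x' and the
   six elements above; these follow from (C1)-(C3) through the involution, the essential one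
   being that y \<and> y' distributes over x, x'. The result is a distributive sublattice
   containing x, x', y, y', 0, 1, hence, by the De Morgan laws, containing Sg(x, y).
   Conversely, (C1)-(C3) are distributive laws among elements of Sg(x, y), because
   x \<and> x' \<le> y \<or> y'. *)

definition distrib_triple :: "'a::lattice \<Rightarrow> 'a \<Rightarrow> 'a \<Rightarrow> bool" where
  "distrib_triple a b d \<longleftrightarrow> inf a (sup b d) = sup (inf a b) (inf a d)"

definition codistrib_triple :: "'a::lattice \<Rightarrow> 'a \<Rightarrow> 'a \<Rightarrow> bool" where
  "codistrib_triple a b d \<longleftrightarrow> sup a (inf b d) = inf (sup a b) (sup a d)"

definition distributes_over :: "'a::lattice \<Rightarrow> 'a set \<Rightarrow> bool" where
  "distributes_over a D \<longleftrightarrow> (\<forall>b\<in>D. \<forall>d\<in>D. distrib_triple a b d)"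

definition sublattice :: "'a::lattice set \<Rightarrow> bool" where
  "sublattice D \<longleftrightarrow> (\<forall>a\<in>D. \<forall>b\<in>D. inf a b \<in> D \<and> sup a b \<in> D)"

definition adjoin :: "'a::lattice set \<Rightarrow> 'a \<Rightarrow> 'a set" where
  "adjoin D a = {sup d (inf a e) | d e. d \<in> D \<and> e \<in> D \<and> d \<le> e}"

definition pair_sublattice :: "'a::bounded_lattice \<Rightarrow> 'a \<Rightarrow> 'a set" where
  "pair_sublattice y z = {bot, inf y z, y, z, sup y z, top}"

lemma distributive_on_iff_distributes_over:
  "distributive_on D \<longleftrightarrow> (\<forall>a\<in>D. distributes_over a D)"
  by (simp add: distributive_on_def distributes_over_def distrib_triple_def)

lemma distributive_on_subset: "distributive_on D \<Longrightarrow> S \<subseteq> D \<Longrightarrow> distributive_on S"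
  unfolding distributive_on_def by blast

lemma sublattice_inf: "sublattice D \<Longrightarrow> a \<in> D \<Longrightarrow> b \<in> D \<Longrightarrow> inf a b \<in> D"
  and sublattice_sup: "sublattice D \<Longrightarrow> a \<in> D \<Longrightarrow> b \<in> D \<Longrightarrow> sup a b \<in> D"
  by (simp_all add: sublattice_def)

lemma distrib_triple_commute: "distrib_triple a b d \<longleftrightarrow> distrib_triple a d b"
  by (simp add: distrib_triple_def sup_commute)

lemma distrib_triple_if_comparable: "b \<le> d \<or> d \<le> b \<Longrightarrow> distrib_triple a b d"
  unfolding distrib_triple_def
  by (metis inf_mono order_refl sup.absorb1 sup.absorb2)

lemma distrib_triple_if_below_or_above:
  "a \<le> b \<or> a \<le> d \<or> sup b d \<le> a \<Longrightarrow> distrib_triple a b d"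
  unfolding distrib_triple_def
  by (elim disjE) (simp_all add: inf.absorb1 inf.absorb2 sup.absorb2 le_supI1 le_supI2)

lemma sublattice_pair_sublattice: "sublattice (pair_sublattice y z)"
  unfolding sublattice_def pair_sublattice_def
  by (auto simp: inf.absorb1 inf.absorb2 sup.absorb1 sup.absorb2 inf_commute sup_commute
      le_infI1 le_supI1)

lemma distributes_over_pair_sublattice:
  assumes "distrib_triple a y z"
  shows "distributes_over a (pair_sublattice y z)"
proof -
  have "b \<le> d \<or> d \<le> b \<or> (b = y \<and> d = z) \<or> (b = z \<and> d = y)"
    if "b \<in> pair_sublattice y z" "d \<in> pair_sublattice y z" for b d
    using that by (auto simp: pair_sublattice_def intro: le_supI1 le_infI1 le_supI2 le_infI2)
  then show ?thesis
    using assms distrib_triple_if_comparable distrib_triple_commute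
    unfolding distributes_over_def by blast
qed

lemma distributive_on_pair_sublattice: "distributive_on (pair_sublattice y z)"
proof -
  have "distrib_triple a y z" if "a \<in> pair_sublattice y z" for a
    using that by (auto simp: pair_sublattice_def intro: distrib_triple_if_below_or_above)
  then show ?thesis
    by (simp add: distributive_on_iff_distributes_over distributes_over_pair_sublattice)
qed

lemma adjoinI: "d \<in> D \<Longrightarrow> e \<in> D \<Longrightarrow> d \<le> e \<Longrightarrow> sup d (inf a e) \<in> adjoin D a"
  unfolding adjoin_def by blast

lemma adjoinE:
  assumes "P \<in> adjoin D a"
  obtains d e where "P = sup d (inf a e)" "d \<in> D" "e \<in> D" "d \<le> e"
  using assms unfolding adjoin_def by blast

lemma subset_adjoin: "D \<subseteq> adjoin D a"
proof
  fix d assume "d \<in> D"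
  moreover have "d = sup d (inf a d)" by (simp add: sup.absorb1)
  ultimately show "d \<in> adjoin D a" by (metis adjoinI order_refl)
qed

lemma mem_adjoin: "bot \<in> D \<Longrightarrow> top \<in> D \<Longrightarrow> (a::'a::bounded_lattice) \<in> adjoin D a"
  using adjoinI[of bot D top a] by simp

lemma sup_adjoin_elements:
  assumes "distrib_triple a d' e'"
  shows "sup (sup d (inf a d')) (sup e (inf a e')) = sup (sup d e) (inf a (sup d' e'))"
  using assms by (simp add: distrib_triple_def ac_simps)

locale modular =
  assumes modular: "\<And>x y z :: 'a::bounded_lattice. x \<le> z \<Longrightarrow> sup x (inf y z) = inf (sup x y) z"
begin

lemma distrib_triple_swap:
  fixes a b d :: 'a
  assumes "distrib_triple a b d"
  shows "distrib_triple b a d"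
proof -
  have "sup d (inf a b) = sup d (inf a (sup b d))"
    using assms by (simp add: distrib_triple_def)
      (metis inf_le2 sup.absorb_iff1 sup.assoc sup.commute)
  also have "\<dots> = inf (sup d a) (sup b d)"
    by (rule modular) simp
  finally have ab: "sup d (inf a b) = inf (sup d a) (sup b d)" .
  have "inf b (sup a d) = inf b (inf (sup b d) (sup a d))"
    by (simp add: inf.absorb1 inf_assoc[symmetric])
  also have "\<dots> = inf b (sup d (inf a b))"
    using ab by (simp add: inf_commute sup_commute)
  also have "\<dots> = sup (inf a b) (inf d b)"
    using modular[of "inf a b" b d] by (simp add: inf_commute sup_commute)
  finally show ?thesis by (simp add: distrib_triple_def inf_commute)
qed

lemma codistrib_triple_swap:
  fixes a b d :: 'a
  assumes "codistrib_triple a b d"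
  shows "codistrib_triple b a d"
proof -
  have "inf (sup (inf b d) a) d = inf (inf (sup a b) (sup a d)) d"
    using assms by (simp add: codistrib_triple_def sup_commute)
  also have "\<dots> = inf d (sup a b)"
    by (metis inf.absorb2 inf.assoc inf.commute sup.cobounded2)
  finally have ab: "inf (sup (inf b d) a) d = inf d (sup a b)" .
  have "inf (sup b a) (sup b d) = sup b (inf d (sup b a))"
    using modular[of b "sup b a" d] by (simp add: inf_commute)
  also have "\<dots> = sup b (sup (inf b d) (inf a d))"
    using ab modular[of "inf b d" d a] by (simp add: sup_commute)
  also have "\<dots> = sup b (inf a d)"
    by (simp add: sup_assoc[symmetric] sup.absorb1)
  finally show ?thesis by (simp add: codistrib_triple_def)
qed

lemma distrib_triple_iff_codistrib_triple:
  fixes a b d :: 'a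
  shows "distrib_triple a b d \<longleftrightarrow> codistrib_triple a b d"
proof
  assume "distrib_triple a b d"
  then have "distrib_triple d a b"
    by (metis distrib_triple_swap distrib_triple_commute)
  then have "inf d (sup a b) = sup (inf d a) (inf d b)" by (simp add: distrib_triple_def)
  moreover have "inf (sup a b) (sup a d) = sup a (inf d (sup a b))"
    using modular[of a "sup a b" d] by (simp add: inf_commute sup_commute)
  ultimately show "codistrib_triple a b d"
    by (simp add: codistrib_triple_def sup_assoc[symmetric] sup.absorb1 inf_commute)
next
  assume "codistrib_triple a b d"
  then have "codistrib_triple d a b"
    by (metis codistrib_triple_swap codistrib_triple_def inf_commute)
  then have "sup d (inf a b) = inf (sup d a) (sup d b)" by (simp add: codistrib_triple_def)
  moreover have "sup (inf a b) (inf a d) = inf a (sup d (inf a b))"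
    using modular[of "inf a b" a d] by (simp add: inf_commute sup_commute)
  ultimately show "distrib_triple a b d"
    by (simp add: distrib_triple_def inf_assoc[symmetric] inf.absorb1 sup_commute)
qed

lemma inf_adjoin_elements:
  fixes a :: 'a
  assumes "distrib_triple a d e" "d \<le> d'" "e \<le> e'"
  shows "inf (sup d (inf a d')) (sup e (inf a e')) = sup (inf d e) (inf a (inf d' e'))"
proof -
  have "inf (sup d (inf a d')) (sup e (inf a e')) = inf (inf (sup d a) d') (inf (sup e a) e')"
    using assms by (simp add: modular)
  also have "\<dots> = inf (inf (sup a d) (sup a e)) (inf d' e')"
    by (simp add: inf_aci sup_commute)
  also have "\<dots> = inf (sup (inf d e) a) (inf d' e')"
    using assms(1) by (simp add: distrib_triple_iff_codistrib_triple codistrib_triple_def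
        sup_commute)
  also have "\<dots> = sup (inf d e) (inf a (inf d' e'))"
    using assms by (intro modular[symmetric]) (meson inf_mono)
  finally show ?thesis .
qed

lemma sublattice_adjoin:
  fixes a :: 'a
  assumes D: "sublattice D" and a: "distributes_over a D"
  shows "sublattice (adjoin D a)"
  unfolding sublattice_def
proof (intro ballI conjI)
  fix P Q assume "P \<in> adjoin D a" "Q \<in> adjoin D a"
  then obtain d d' e e' where P: "P = sup d (inf a d')" "d \<in> D" "d' \<in> D" "d \<le> d'"
    and Q: "Q = sup e (inf a e')" "e \<in> D" "e' \<in> D" "e \<le> e'"
    by (metis adjoinE)
  have "inf P Q = sup (inf d e) (inf a (inf d' e'))"
    using P Q a by (simp add: inf_adjoin_elements distributes_over_def)
  moreover have "inf d e \<le> inf d' e'" using P Q by (meson inf_mono)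
  ultimately show "inf P Q \<in> adjoin D a"
    using P Q D by (metis adjoinI sublattice_inf)
  have "sup P Q = sup (sup d e) (inf a (sup d' e'))"
    using P Q a by (simp add: sup_adjoin_elements distributes_over_def)
  moreover have "sup d e \<le> sup d' e'" using P Q by (meson sup_mono)
  ultimately show "sup P Q \<in> adjoin D a"
    using P Q D by (metis adjoinI sublattice_sup)
qed

lemma distributive_on_adjoin:
  fixes a :: 'a
  assumes D: "sublattice D" "distributive_on D" and a: "distributes_over a D"
  shows "distributive_on (adjoin D a)"
  unfolding distributive_on_def
proof (intro ballI)
  fix P Q R assume "P \<in> adjoin D a" "Q \<in> adjoin D a" "R \<in> adjoin D a"
  then obtain d d' e e' g g' where P: "P = sup d (inf a d')" "d \<in> D" "d' \<in> D" "d \<le> d'"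
    and Q: "Q = sup e (inf a e')" "e \<in> D" "e' \<in> D" "e \<le> e'"
    and R: "R = sup g (inf a g')" "g \<in> D" "g' \<in> D" "g \<le> g'"
    by (metis adjoinE)
  have a_D: "distrib_triple a b b'" if "b \<in> D" "b' \<in> D" for b b'
    using a that by (simp add: distributes_over_def)
  have D_distrib: "inf b (sup b' b'') = sup (inf b b') (inf b b'')"
    if "b \<in> D" "b' \<in> D" "b'' \<in> D" for b b' b''
    using D(2) that unfolding distributive_on_def by blast
  have "inf P (sup Q R) = inf (sup d (inf a d')) (sup (sup e g) (inf a (sup e' g')))"
    using P(1) Q R a_D by (simp add: sup_adjoin_elements)
  also have "\<dots> = sup (inf d (sup e g)) (inf a (inf d' (sup e' g')))"
    using P Q R a_D sublattice_sup[OF D(1) Q(2) R(2)] sup_mono[OF Q(4) R(4)]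
    by (intro inf_adjoin_elements) simp_all
  also have "\<dots> = sup (sup (inf d e) (inf d g)) (inf a (sup (inf d' e') (inf d' g')))"
    using P Q R D_distrib by simp
  also have "\<dots> = sup (sup (inf d e) (inf a (inf d' e'))) (sup (inf d g) (inf a (inf d' g')))"
    using P Q R D(1) a_D by (simp add: sup_adjoin_elements sublattice_inf)
  also have "\<dots> = sup (inf P Q) (inf P R)"
    using P Q R a_D by (simp add: inf_adjoin_elements)
  finally show "inf P (sup Q R) = sup (inf P Q) (inf P R)" .
qed

lemma distributes_over_adjoin:
  fixes a b :: 'a
  assumes D: "sublattice D" and a: "distributes_over a D" and b: "distributes_over b D"
    and b_a: "\<forall>d\<in>D. distrib_triple b d a" and ba: "distributes_over (inf b a) D"
  shows "distributes_over b (adjoin D a)"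
  unfolding distributes_over_def distrib_triple_def
proof (intro ballI)
  have inf_b: "inf b (sup d (inf a e)) = sup (inf b d) (inf (inf b a) e)"
    if "d \<in> D" "d \<le> e" for d e
  proof -
    have "inf b (sup d (inf a e)) = inf (inf b (sup d a)) e"
      using that by (simp add: modular inf_assoc)
    also have "\<dots> = inf (sup (inf b d) (inf b a)) e"
      using b_a that by (simp add: distrib_triple_def)
    also have "\<dots> = sup (inf b d) (inf (inf b a) e)"
      using that by (intro modular[symmetric]) (meson inf.coboundedI2)
    finally show ?thesis .
  qed
  fix P Q assume "P \<in> adjoin D a" "Q \<in> adjoin D a"
  then obtain d d' e e' where P: "P = sup d (inf a d')" "d \<in> D" "d' \<in> D" "d \<le> d'"
    and Q: "Q = sup e (inf a e')" "e \<in> D" "e' \<in> D" "e \<le> e'"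
    by (metis adjoinE)
  have "inf b (sup P Q) = inf b (sup (sup d e) (inf a (sup d' e')))"
    using P Q a by (simp add: sup_adjoin_elements distributes_over_def)
  also have "\<dots> = sup (inf b (sup d e)) (inf (inf b a) (sup d' e'))"
    using inf_b[of "sup d e" "sup d' e'"] P Q D sup_mono[OF P(4) Q(4)]
    by (simp add: sublattice_sup)
  also have "\<dots> = sup (sup (inf b d) (inf b e)) (sup (inf (inf b a) d') (inf (inf b a) e'))"
    using P Q b ba by (simp add: distributes_over_def distrib_triple_def)
  also have "\<dots> = sup (sup (inf b d) (inf (inf b a) d')) (sup (inf b e) (inf (inf b a) e'))"
    by (simp add: ac_simps)
  also have "\<dots> = sup (inf b P) (inf b Q)"
    using P Q inf_b by simp
  finally show "inf b (sup P Q) = sup (inf b P) (inf b Q)" .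
qed

end

locale pseudo_kleene_lattice =
  fixes c :: "'a::bounded_lattice \<Rightarrow> 'a"
  assumes c_antimono: "x \<le> y \<Longrightarrow> c y \<le> c x"
    and c_c [simp]: "c (c x) = x"
    and inf_c_le_sup_c: "inf x (c x) \<le> sup y (c y)"
begin

lemma c_inf [simp]: "c (inf a b) = sup (c a) (c b)"
proof (rule antisym)
  have "c (sup (c a) (c b)) \<le> inf a b"
    by (metis c_antimono c_c le_inf_iff sup_ge1 sup_ge2)
  then show "c (inf a b) \<le> sup (c a) (c b)"
    by (metis c_antimono c_c)
  show "sup (c a) (c b) \<le> c (inf a b)"
    by (simp add: c_antimono)
qed

lemma c_sup [simp]: "c (sup a b) = inf (c a) (c b)"
  by (metis c_inf c_c)

lemma c_bot [simp]: "c bot = top"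
  by (metis c_antimono c_c bot_least top.extremum_unique)

lemma c_top [simp]: "c top = bot"
  by (metis c_bot c_c)

lemma commutes_iff_distrib_triples:
  "commutes c x y \<longleftrightarrow>
     distrib_triple x y (c y) \<and> distrib_triple y x (c x) \<and> distrib_triple (inf x (c x)) y (c y)"
proof -
  have "inf (inf x (c x)) (sup y (c y)) = inf x (c x)"
    using inf_c_le_sup_c by (rule inf.absorb1)
  then show ?thesis
    by (auto simp: commutes_def distrib_triple_def)
qed

text \<open>F need not be closed under c: the induction carries z and c z together.\<close>
lemma Sg_subset_sublattice:
  assumes F: "sublattice F" and gens: "{bot, top, x, c x, y, c y} \<subseteq> F"
  shows "Sg c x y \<subseteq> F"
proof -
  have "z \<in> F \<and> c z \<in> F" if "z \<in> Sg c x y" for z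
    using that by induction (use F gens in \<open>auto intro: sublattice_inf sublattice_sup\<close>)
  then show ?thesis by blast
qed

lemma commutes_if_distributive_on_Sg:
  assumes "distributive_on (Sg c x y)"
  shows "commutes c x y"
proof -
  have "x \<in> Sg c x y" "y \<in> Sg c x y" "c x \<in> Sg c x y" "c y \<in> Sg c x y"
    "inf x (c x) \<in> Sg c x y"
    by (auto intro: Sg.intros)
  then show ?thesis
    using assms unfolding commutes_iff_distrib_triples distributive_on_def distrib_triple_def
    by blast
qed

end

locale modular_pseudo_kleene_lattice = modular + pseudo_kleene_lattice c
  for c :: "'a::bounded_lattice \<Rightarrow> 'a"
begin

lemma distrib_triple_c:
  assumes "distrib_triple a b d"
  shows "distrib_triple (c a) (c b) (c d)"
proof -
  have "c (inf a (sup b d)) = c (sup (inf a b) (inf a d))"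
    using assms by (simp add: distrib_triple_def)
  then have "codistrib_triple (c a) (c b) (c d)"
    by (simp add: codistrib_triple_def)
  then show ?thesis
    using distrib_triple_iff_codistrib_triple by blast
qed

lemma distrib_triple_inf_c_if_commutes:
  assumes "commutes c x y"
  shows "distrib_triple (inf y (c y)) x (c x)"
proof -
  define u where "u = inf x (c x)"
  define p where "p = inf y (c y)"
  have C1: "distrib_triple x y (c y)" and C2: "distrib_triple y x (c x)"
    and C3: "distrib_triple u y (c y)"
    using assms by (simp_all add: commutes_iff_distrib_triples u_def)
  have cx_p: "sup (c x) p = inf (sup (c x) y) (sup (c x) (c y))"
    using distrib_triple_c[OF C1]
    by (simp add: p_def distrib_triple_commute distrib_triple_iff_codistrib_triple
        codistrib_triple_def)
  have x_y: "inf x (sup y (c x)) = sup (inf x y) u"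
    using distrib_triple_swap[OF C2] by (simp add: distrib_triple_def u_def)
  have "distrib_triple (c y) x (c x)"
    using distrib_triple_c[OF C2] by (simp add: distrib_triple_commute)
  then have x_cy: "inf x (sup (c y) (c x)) = sup (inf x (c y)) u"
    using distrib_triple_swap by (simp add: distrib_triple_def u_def)
  have "inf u x = u" by (simp add: u_def inf.absorb1)
  then have "distrib_triple u (inf x y) (inf x (c y))"
    using C1 C3 unfolding distrib_triple_def by (metis inf.assoc)
  then have u_xy: "codistrib_triple u (inf x y) (inf x (c y))"
    by (simp add: distrib_triple_iff_codistrib_triple)
  have "inf x (sup p (c x)) = inf x (inf (sup (c x) y) (sup (c x) (c y)))"
    using cx_p by (simp add: sup_commute)
  also have "\<dots> = inf (inf x (sup y (c x))) (inf x (sup (c y) (c x)))"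
    by (simp add: inf_aci sup_commute)
  also have "\<dots> = inf (sup u (inf x y)) (sup u (inf x (c y)))"
    using x_y x_cy by (simp add: sup_commute)
  also have "\<dots> = sup (inf x p) (inf x (c x))"
    using u_xy by (simp add: codistrib_triple_def p_def u_def inf_aci sup_commute)
  finally have "distrib_triple x p (c x)"
    by (simp add: distrib_triple_def)
  then show ?thesis
    unfolding p_def by (rule distrib_triple_swap)
qed

lemma distrib_triple_pair_sublattice_if_commutes:
  assumes "commutes c x y" "d \<in> pair_sublattice y (c y)"
  shows "distrib_triple d x (c x)"
proof -
  have C2: "distrib_triple y x (c x)"
    using assms(1) by (simp add: commutes_iff_distrib_triples)
  have p: "distrib_triple (inf y (c y)) x (c x)"
    using assms(1) by (rule distrib_triple_inf_c_if_commutes)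
  have "distrib_triple bot x (c x)" "distrib_triple top x (c x)"
    by (simp_all add: distrib_triple_def)
  moreover have "distrib_triple (c y) x (c x)"
    using distrib_triple_c[OF C2] by (simp add: distrib_triple_commute)
  moreover have "distrib_triple (sup y (c y)) x (c x)"
    using distrib_triple_c[OF p] by (simp add: distrib_triple_commute sup_commute)
  ultimately show ?thesis
    using assms(2) C2 p by (auto simp: pair_sublattice_def)
qed

lemma distributive_sublattice_if_commutes:
  assumes "commutes c x y"
  obtains F where "sublattice F" "distributive_on F" "{bot, top, x, c x, y, c y} \<subseteq> F"
proof -
  have C1: "distrib_triple x y (c y)" and C3: "distrib_triple (inf x (c x)) y (c y)"
    using assms by (simp_all add: commutes_iff_distrib_triples)
  define D where "D = pair_sublattice y (c y)"
  have D: "sublattice D" "distributive_on D" "{bot, top, y, c y} \<subseteq> D"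
    unfolding D_def using sublattice_pair_sublattice distributive_on_pair_sublattice
    by (auto simp: pair_sublattice_def)
  have x_D: "distributes_over x D"
    unfolding D_def using C1 by (rule distributes_over_pair_sublattice)
  have cx_D: "distributes_over (c x) D"
    unfolding D_def using distrib_triple_c[OF C1]
    by (simp add: distrib_triple_commute distributes_over_pair_sublattice)
  have meet_D: "distributes_over (inf (c x) x) D"
    unfolding D_def using C3 by (simp add: inf_commute distributes_over_pair_sublattice)
  have cx_x: "\<forall>d\<in>D. distrib_triple (c x) d x"
  proof
    fix d assume "d \<in> D"
    with assms have "distrib_triple d x (c x)"
      unfolding D_def by (rule distrib_triple_pair_sublattice_if_commutes)
    then show "distrib_triple (c x) d x"
      by (rule distrib_triple_swap[OF distrib_triple_commute[THEN iffD1]])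
  qed
  define E where "E = adjoin D x"
  have E: "sublattice E" "distributive_on E" "D \<subseteq> E" "x \<in> E"
    using D x_D subset_adjoin[of D x]
    by (simp_all add: E_def sublattice_adjoin distributive_on_adjoin mem_adjoin)
  have cx_E: "distributes_over (c x) E"
    unfolding E_def using D(1) x_D cx_D cx_x meet_D by (rule distributes_over_adjoin)
  show ?thesis
  proof
    show "sublattice (adjoin E (c x))" "distributive_on (adjoin E (c x))"
      using E cx_E by (simp_all add: sublattice_adjoin distributive_on_adjoin)
    show "{bot, top, x, c x, y, c y} \<subseteq> adjoin E (c x)"
      using D(3) E(3,4) subset_adjoin[of E "c x"] mem_adjoin[of E "c x"] by auto
  qed
qed

end

theorem theorem4p14:
  fixes c :: "'a::bounded_lattice \<Rightarrow> 'a"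
  assumes "pseudo_kleene c"
    and "modular_lattice TYPE('a)"
  shows "commutes c x y \<longleftrightarrow> distributive_on (Sg c x y)"
proof -
  interpret modular_pseudo_kleene_lattice c
    using assms unfolding pseudo_kleene_def modular_lattice_def by unfold_locales blast+
  show ?thesis
  proof
    assume "commutes c x y"
    then obtain F where "sublattice F" "distributive_on F" "{bot, top, x, c x, y, c y} \<subseteq> F"
      by (rule distributive_sublattice_if_commutes)
    then show "distributive_on (Sg c x y)"
      by (meson Sg_subset_sublattice distributive_on_subset)
  qed (rule commutes_if_distributive_on_Sg)
qed

end
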